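(* Let $q$ be a prime power and let $L\subseteq[q-1]$ with $|L|=s\ge1$. If $\mathcal{F}\subseteq 2^{[n]}$ is $q$-modular $L$-differencing Sperner, then $$|\mathcal{F}|\le\sum_{i=0}^{2^{s-1}}\binom{n}{i}.$$
   Context: $[n]=\{1,\ldots,n\}$, $2^{[n]}$ is the family of all subsets of $[n]$. For $L\subseteq[q-1]$, $\mathcal{F}$ is $q$-modular $L$-differencing Sperner if for all distinct $A,B\in\mathcal{F}$, $|A\setminus B|\equiv\ell\pmod q$ for some $\ell\in L$. *)

theory Defs
  imports "HOL-Computational_Algebra.Primes"
begin

definition prime_power :: "nat \<Rightarrow> bool" where
  "prime_power q \<longleftrightarrow> (\<exists>p k. prime p \<and> k \<ge> 1 \<and> q = p ^ k)"

definition modular_L_differencing_Sperner :: "nat \<Rightarrow> nat set \<Rightarrow> nat set set \<Rightarrow> bool" where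
  "modular_L_differencing_Sperner q L F \<longleftrightarrow>
     (\<forall>A\<in>F. \<forall>B\<in>F. A \<noteq> B \<longrightarrow> (\<exists>l\<in>L. card (A - B) mod q = l mod q))"

end

theory Submission
  imports Defs Complex_Main "HOL-Library.Function_Algebras" "HOL-Computational_Algebra.Squarefree"
begin

text \<open>
  Write \<open>q = p\<^sup>k\<close>.  From \<open>L\<close> one builds an integer polynomial \<open>f(y) = \<Prod>c. (y - c)\<close> of
  degree \<open>2\<^sup>s\<^sup>-\<^sup>1\<close> with roots in \<open>L\<close> such that the \<open>p\<close>-adic valuation of \<open>f(y)\<close> exceeds
  that of \<open>f(0)\<close>, say \<open>E\<close>, whenever \<open>y mod q \<in> L\<close>.  The integer matrix \<open>f(|A - B|)\<close>,
  \<open>A, B \<in> F\<close>, is then \<open>p\<^sup>E\<close> times a matrix that is diagonal and invertible modulo \<open>p\<close>,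
  so the functions \<open>X \<mapsto> f(|A - X|)\<close> are linearly independent over \<open>\<rat>\<close>.  As \<open>|A - X|\<close>
  is a sum of the indicators \<open>i \<notin> X\<close>, each of them is a multilinear polynomial of degree at
  most \<open>2\<^sup>s\<^sup>-\<^sup>1\<close> in these indicators, and the space of such polynomials has dimension
  \<open>\<Sum>i\<le>2\<^sup>s\<^sup>-\<^sup>1. n choose i\<close>.
\<close>

section \<open>Valuations of root products\<close>

lemma power_dvd_prod_list:
  fixes a :: "'a::comm_monoid_mult"
  assumes "\<And>x. x \<in> set xs \<Longrightarrow> a dvd f x"
  shows "a ^ length xs dvd (\<Prod>x\<leftarrow>xs. f x)"
  using assms by (induction xs) (simp_all add: mult_dvd_mono)

lemma multiplicity_prod_list:
  assumes "prime_elem p" "0 \<notin> set xs"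
  shows "multiplicity p (prod_list xs) = (\<Sum>x\<leftarrow>xs. multiplicity p x)"
  using assms(2)
  by (induction xs) (simp_all add: prime_elem_multiplicity_mult_distrib assms(1) prod_list_zero_iff)

lemma multiplicity_less_if_less_power:
  fixes p c :: int
  assumes "prime p" "0 < c" "c < p ^ k"
  shows "multiplicity p c < k"
proof (rule multiplicity_lessI)
  show "\<not> p ^ k dvd c"
    using assms by (auto dest: zdvd_imp_le)
qed (use assms in \<open>auto simp: not_prime_unit\<close>)

lemma exact_power_dvd_prod_list_uminus:
  fixes p :: int
  assumes "prime p" "0 \<notin> set cs"
  defines "E \<equiv> \<Sum>c\<leftarrow>cs. multiplicity p c"
  shows "p ^ E dvd (\<Prod>c\<leftarrow>cs. - c)" and "\<not> p ^ Suc E dvd (\<Prod>c\<leftarrow>cs. - c)"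
proof -
  have nonzero: "(\<Prod>c\<leftarrow>cs. - c) \<noteq> 0"
    using assms(2) by (auto simp: prod_list_zero_iff)
  have "multiplicity p (\<Prod>c\<leftarrow>cs. - c) = (\<Sum>c\<leftarrow>map uminus cs. multiplicity p c)"
    by (rule multiplicity_prod_list) (use assms in \<open>auto simp: prime_imp_prime_elem\<close>)
  then have multiplicity: "multiplicity p (\<Prod>c\<leftarrow>cs. - c) = E"
    by (simp add: E_def o_def)
  then show "p ^ E dvd (\<Prod>c\<leftarrow>cs. - c)"
    by (metis multiplicity_dvd)
  have "\<not> is_unit p"
    using assms(1) not_prime_unit by blast
  then show "\<not> p ^ Suc E dvd (\<Prod>c\<leftarrow>cs. - c)"
    using power_dvd_iff_le_multiplicity[OF nonzero \<open>\<not> is_unit p\<close>, of "Suc E"] multiplicity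
    by simp
qed

lemma sum_multiplicity_le_if_less_power:
  fixes p :: int
  assumes "prime p" "set cs \<subseteq> {1..<p ^ k}"
  shows "(\<Sum>c\<leftarrow>cs. multiplicity p c) + length cs \<le> length cs * k"
proof -
  have "Suc (multiplicity p c) \<le> k" if "c \<in> set cs" for c
    using multiplicity_less_if_less_power[OF assms(1), of c k] that assms(2) by auto
  then have "(\<Sum>c\<leftarrow>cs. Suc (multiplicity p c)) \<le> (\<Sum>c\<leftarrow>cs. k)"
    by (rule sum_list_mono)
  then show ?thesis
    by (simp add: sum_list_Suc sum_list_triv)
qed

lemma power_min_multiplicity_dvd_diff:
  fixes p :: int
  assumes p: "prime p" and L: "L \<subseteq> {1..<p ^ k}"
    and l0: "l0 \<in> L" and min: "\<And>l. l \<in> L \<Longrightarrow> multiplicity p l0 \<le> multiplicity p l"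
    and y: "y mod p ^ k \<in> L" and c: "c \<in> L"
  shows "p ^ multiplicity p l0 dvd y - c"
proof -
  have dvd_L: "p ^ multiplicity p l0 dvd l" if "l \<in> L" for l
    using min[OF that] multiplicity_dvd[of p l] by (meson dvd_trans le_imp_power_dvd)
  have "multiplicity p l0 < k"
    using multiplicity_less_if_less_power[OF p] l0 L by force
  then have "p ^ multiplicity p l0 dvd p ^ k"
    by (simp add: le_imp_power_dvd)
  then have "p ^ multiplicity p l0 dvd y"
    using dvd_L[OF y] by (simp add: dvd_mod_iff)
  then show ?thesis
    using dvd_L[OF c] by (rule dvd_diff)
qed

text \<open>
  A residue \<open>l\<^sub>0\<close> of minimal valuation
  \<open>v\<close> is added with multiplicity equal to the number of existing roots: then every factor
  \<open>y - c\<close> gains at least \<open>v\<close>, while at \<open>y \<equiv> l\<^sub>0\<close> the new factors gain \<open>k\<close> each.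
\<close>

lemma root_list_append_min_multiplicity:
  fixes p :: int
  assumes p: "prime p" and L: "L \<subseteq> {1..<p ^ k}"
    and l0: "l0 \<in> L" and min: "\<And>l. l \<in> L \<Longrightarrow> multiplicity p l0 \<le> multiplicity p l"
    and cs: "set cs \<subseteq> L - {l0}" "length cs = m" "0 < m"
    and gain: "\<And>y. y mod p ^ k \<in> L - {l0} \<Longrightarrow>
      p ^ Suc (\<Sum>c\<leftarrow>cs. multiplicity p c) dvd (\<Prod>c\<leftarrow>cs. y - c)"
    and y: "y mod p ^ k \<in> L"
  shows "p ^ Suc (\<Sum>c\<leftarrow>cs @ replicate m l0. multiplicity p c)
      dvd (\<Prod>c\<leftarrow>cs @ replicate m l0. y - c)"
proof -
  define v where "v = multiplicity p l0"
  define E where "E = (\<Sum>c\<leftarrow>cs. multiplicity p c)"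
  have dvd_diff: "p ^ v dvd y - c" if "c \<in> L" for c
    unfolding v_def using power_min_multiplicity_dvd_diff[OF p L l0 min y that] .
  have sum_eq: "(\<Sum>c\<leftarrow>cs @ replicate m l0. multiplicity p c) = E + v * m"
    by (simp add: E_def v_def sum_list_replicate)
  have prod_eq: "(\<Prod>c\<leftarrow>cs @ replicate m l0. y - c) = (\<Prod>c\<leftarrow>cs. y - c) * (y - l0) ^ m"
    by simp
  show ?thesis
  proof (cases "y mod p ^ k = l0")
    case True
    have "(p ^ v) ^ m dvd (\<Prod>c\<leftarrow>cs. y - c)"
      using power_dvd_prod_list[of cs "p ^ v" "\<lambda>c. y - c"] dvd_diff cs(1,2) by blast
    moreover have "(p ^ k) ^ m dvd (y - l0) ^ m"
    proof -
      have "l0 mod p ^ k = l0"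
        using l0 L by auto
      then have "p ^ k dvd y - l0"
        using True by (metis mod_eq_dvd_iff)
      then show ?thesis
        by (rule dvd_power_same)
    qed
    ultimately have "p ^ (v * m + k * m) dvd (\<Prod>c\<leftarrow>cs. y - c) * (y - l0) ^ m"
      by (simp add: power_add power_mult mult_dvd_mono)
    moreover have "E + m \<le> m * k"
      using sum_multiplicity_le_if_less_power[OF p, of cs k] cs L unfolding E_def by auto
    then have "Suc (E + v * m) \<le> v * m + k * m"
      using cs(3) by (simp add: mult.commute)
    ultimately show ?thesis
      unfolding sum_eq prod_eq by (meson dvd_trans le_imp_power_dvd)
  next
    case False
    then have "p ^ Suc E dvd (\<Prod>c\<leftarrow>cs. y - c)"
      using gain y unfolding E_def by blast
    moreover have "(p ^ v) ^ m dvd (y - l0) ^ m"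
      using dvd_diff[OF l0] by (rule dvd_power_same)
    ultimately have "p ^ Suc E * (p ^ v) ^ m dvd (\<Prod>c\<leftarrow>cs. y - c) * (y - l0) ^ m"
      by (rule mult_dvd_mono)
    moreover have "p ^ Suc E * (p ^ v) ^ m = p ^ Suc (E + v * m)"
      by (simp only: power_add power_mult power_Suc mult.assoc)
    ultimately show ?thesis
      unfolding sum_eq prod_eq by metis
  qed
qed

lemma exists_root_list_with_multiplicity_gain:
  fixes p :: int
  assumes p: "prime p" and "L \<subseteq> {1..<p ^ k}" "card L = Suc n"
  shows "\<exists>cs. length cs = 2 ^ n \<and> set cs \<subseteq> L \<and>
    (\<forall>y. y mod p ^ k \<in> L \<longrightarrow> p ^ Suc (\<Sum>c\<leftarrow>cs. multiplicity p c) dvd (\<Prod>c\<leftarrow>cs. y - c))"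
  using assms(2,3)
proof (induction n arbitrary: L)
  case 0
  then obtain l where L: "L = {l}"
    by (auto simp: card_Suc_eq)
  have "multiplicity p l < k"
    using multiplicity_less_if_less_power[OF p, of l k] 0 L by simp
  then have "p ^ Suc (multiplicity p l) dvd p ^ k"
    by (simp add: Suc_leI le_imp_power_dvd del: power_Suc)
  moreover have "p ^ k dvd y - l" if "y mod p ^ k = l" for y
    using that L 0 by (simp add: mod_eq_dvd_iff[symmetric])
  ultimately have "p ^ Suc (multiplicity p l) dvd y - l" if "y mod p ^ k \<in> L" for y
    using that L dvd_trans by blast
  then show ?case
    using L by (intro exI[of _ "[l]"]) simp
next
  case (Suc n)
  have "card L > 0"
    using Suc.prems(2) by simp
  then have fin: "finite L" and ne: "L \<noteq> {}"
    by (auto simp: card_gt_0_iff)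
  define l0 where "l0 = arg_min_on (multiplicity p) L"
  have l0: "l0 \<in> L"
    using arg_min_if_finite(1)[OF fin ne] unfolding l0_def .
  have min: "\<And>l. l \<in> L \<Longrightarrow> multiplicity p l0 \<le> multiplicity p l"
    using arg_min_least[OF fin ne] unfolding l0_def .
  have "L - {l0} \<subseteq> {1..<p ^ k}" "card (L - {l0}) = Suc n"
    using Suc.prems l0 fin by (auto simp: card_Diff_singleton)
  obtain cs where cs: "length cs = 2 ^ n" "set cs \<subseteq> L - {l0}"
    and gain: "\<And>y. y mod p ^ k \<in> L - {l0} \<Longrightarrow>
      p ^ Suc (\<Sum>c\<leftarrow>cs. multiplicity p c) dvd (\<Prod>c\<leftarrow>cs. y - c)"
    using Suc.IH[OF \<open>L - {l0} \<subseteq> {1..<p ^ k}\<close> \<open>card (L - {l0}) = Suc n\<close>] by blast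
  have "length (cs @ replicate (2 ^ n) l0) = 2 ^ Suc n" "set (cs @ replicate (2 ^ n) l0) \<subseteq> L"
    using cs l0 by auto
  moreover have "p ^ Suc (\<Sum>c\<leftarrow>cs @ replicate (2 ^ n) l0. multiplicity p c)
      dvd (\<Prod>c\<leftarrow>cs @ replicate (2 ^ n) l0. y - c)" if "y mod p ^ k \<in> L" for y
    using root_list_append_min_multiplicity[OF p Suc.prems(1) l0 min cs(2) cs(1) _ gain that] by simp
  ultimately show ?case
    by blast
qed

lemma exists_root_list_modulo_prime_power:
  assumes "prime_power q" "L \<subseteq> {1..q - 1}" "card L = Suc n"
  obtains p cs where "prime p" "length cs = 2 ^ n" "set cs \<subseteq> int ` L"
    "\<And>y. y mod int q \<in> int ` L \<Longrightarrow> p ^ Suc (\<Sum>c\<leftarrow>cs. multiplicity p c) dvd (\<Prod>c\<leftarrow>cs. y - c)"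
proof -
  obtain p k where "prime p" and q: "q = p ^ k"
    using assms(1) unfolding prime_power_def by blast
  then have p: "prime (int p)"
    by simp
  have L: "int ` L \<subseteq> {1..<int p ^ k}"
  proof
    fix x assume "x \<in> int ` L"
    then obtain l where "x = int l" "l \<in> {1..q - 1}"
      using assms(2) by blast
    then show "x \<in> {1..<int p ^ k}"
      by (auto simp: q simp flip: of_nat_power)
  qed
  have card_L: "card (int ` L) = Suc n"
    using assms(3) by (simp add: card_image)
  obtain cs where "length cs = 2 ^ n" "set cs \<subseteq> int ` L"
    and gain: "\<forall>y. y mod int p ^ k \<in> int ` L \<longrightarrow>
      int p ^ Suc (\<Sum>c\<leftarrow>cs. multiplicity (int p) c) dvd (\<Prod>c\<leftarrow>cs. y - c)"
    using exists_root_list_with_multiplicity_gain[OF p L card_L] by (elim exE conjE) (rule that)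
  moreover have "int q = int p ^ k"
    using q by simp
  ultimately show thesis
    using that[OF p] by metis
qed

section \<open>Multilinear functions on subsets\<close>

definition fun_scale :: "'b::field \<Rightarrow> ('a \<Rightarrow> 'b) \<Rightarrow> 'a \<Rightarrow> 'b" where
  "fun_scale c f = (\<lambda>x. c * f x)"

interpretation fun_space: vector_space fun_scale
  by unfold_locales (auto simp: fun_scale_def fun_eq_iff algebra_simps)

lemma sum_fun_apply: "(\<Sum>i\<in>I. f i) x = (\<Sum>i\<in>I. f i x)"
  by (induction I rule: infinite_finite_induct) (simp_all add: plus_fun_def zero_fun_def)

definition disjoint_indicator :: "'a set \<Rightarrow> 'a set \<Rightarrow> 'b::field" where
  "disjoint_indicator S X = (if S \<inter> X = {} then 1 else 0)"

text \<open>
  Evaluated at the characteristic vector \<open>x\<close> of \<open>X\<close>, the monomial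
  \<open>\<Prod>i\<in>S. 1 - x\<^sub>i\<close> is \<open>disjoint_indicator S X\<close>; so \<open>low_degree_span U d\<close> is
  the space of multilinear polynomials of degree at most \<open>d\<close> in the variables indexed by \<open>U\<close>.
\<close>

definition low_degree_span :: "'a set \<Rightarrow> nat \<Rightarrow> ('a set \<Rightarrow> 'b::field) set" where
  "low_degree_span U d = fun_space.span (disjoint_indicator ` {S. S \<subseteq> U \<and> card S \<le> d})"

lemma low_degree_span_mono: "d \<le> d' \<Longrightarrow> low_degree_span U d \<subseteq> low_degree_span U d'"
  unfolding low_degree_span_def by (rule fun_space.span_mono) auto

lemma card_insert_le_Suc: "card (insert x S) \<le> Suc (card S)"
  by (cases "finite S") (auto simp: card_insert_if)

lemma not_mem_times_in_low_degree_span: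
  assumes i: "i \<in> U" and g: "g \<in> low_degree_span U d"
  shows "(\<lambda>X. (if i \<in> X then 0 else 1) * g X) \<in> low_degree_span U (Suc d)"
  using g unfolding low_degree_span_def
proof (induction rule: fun_space.span_induct_alt)
  case base
  show ?case
    using fun_space.span_zero by (simp add: zero_fun_def)
next
  case (step c x y)
  then obtain S where S: "x = disjoint_indicator S" "S \<subseteq> U" "card S \<le> d"
    by auto
  have eq: "(\<lambda>X. (if i \<in> X then 0 else 1) * (fun_scale c x + y) X)
      = fun_scale c (disjoint_indicator (insert i S)) + (\<lambda>X. (if i \<in> X then 0 else 1) * y X)"
    unfolding S(1) by (simp add: fun_eq_iff fun_scale_def disjoint_indicator_def plus_fun_def)
  have "disjoint_indicator (insert i S) \<in> disjoint_indicator ` {S. S \<subseteq> U \<and> card S \<le> Suc d}"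
    using S i card_insert_le_Suc[of i S] by auto
  then have "fun_scale c (disjoint_indicator (insert i S))
      \<in> fun_space.span (disjoint_indicator ` {S. S \<subseteq> U \<and> card S \<le> Suc d})"
    by (intro fun_space.span_scale fun_space.span_base)
  then show ?case
    unfolding eq using step.IH by (rule fun_space.span_add)
qed

lemma card_diff_minus_times_in_low_degree_span:
  fixes c :: "'b::field"
  assumes "finite A" "A \<subseteq> U" and g: "g \<in> low_degree_span U d"
  shows "(\<lambda>X. (of_nat (card (A - X)) - c) * g X) \<in> low_degree_span U (Suc d)"
  using assms(1,2)
proof (induction A rule: finite_induct)
  case empty
  have "g \<in> low_degree_span U (Suc d)"
    using g low_degree_span_mono[of d "Suc d"] by auto
  then have "fun_scale (- c) g \<in> low_degree_span U (Suc d)"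
    unfolding low_degree_span_def by (rule fun_space.span_scale)
  then show ?case
    by (simp add: fun_scale_def algebra_simps)
next
  case (insert a A)
  have "(of_nat (card (insert a A - X)) - c) * g X
      = (of_nat (card (A - X)) - c) * g X + (if a \<in> X then 0 else 1) * g X" for X
    using insert.hyps by (cases "a \<in> X") (simp_all add: insert_Diff_if algebra_simps)
  then have eq: "(\<lambda>X. (of_nat (card (insert a A - X)) - c) * g X)
      = (\<lambda>X. (of_nat (card (A - X)) - c) * g X) + (\<lambda>X. (if a \<in> X then 0 else 1) * g X)"
    unfolding plus_fun_def by (rule ext)
  have "(\<lambda>X. (of_nat (card (A - X)) - c) * g X) \<in> low_degree_span U (Suc d)"
    using insert.IH insert.prems by simp
  moreover have "(\<lambda>X. (if a \<in> X then 0 else 1) * g X) \<in> low_degree_span U (Suc d)"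
    using not_mem_times_in_low_degree_span[OF _ g] insert.prems by simp
  ultimately show ?case
    unfolding eq low_degree_span_def by (rule fun_space.span_add)
qed

lemma of_int_prod_list: "of_int (prod_list xs) = prod_list (map of_int xs)"
  by (induction xs) simp_all

lemma prod_card_diff_in_low_degree_span:
  fixes A :: "'a set" and cs :: "'b::field list"
  assumes "finite A" "A \<subseteq> U"
  shows "(\<lambda>X. \<Prod>c\<leftarrow>cs. of_nat (card (A - X)) - c) \<in> low_degree_span U (length cs)"
proof (induction cs)
  case Nil
  have "(disjoint_indicator {} :: 'a set \<Rightarrow> 'b) \<in> low_degree_span U 0"
    unfolding low_degree_span_def by (rule fun_space.span_base) auto
  moreover have "(disjoint_indicator {} :: 'a set \<Rightarrow> 'b) = (\<lambda>X. 1)"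
    by (simp add: fun_eq_iff disjoint_indicator_def)
  ultimately show ?case
    by simp
next
  case (Cons c cs)
  then show ?case
    using card_diff_minus_times_in_low_degree_span[OF assms] by simp
qed

lemma of_int_prod_card_diff_in_low_degree_span:
  assumes "finite U" "A \<subseteq> U"
  shows "(\<lambda>X. of_int (\<Prod>c\<leftarrow>cs. int (card (A - X)) - c) :: 'b::field) \<in> low_degree_span U (length cs)"
proof -
  have "(\<lambda>X. of_int (\<Prod>c\<leftarrow>cs. int (card (A - X)) - c) :: 'b)
      = (\<lambda>X. \<Prod>c\<leftarrow>map of_int cs. of_nat (card (A - X)) - c)"
    by (simp add: fun_eq_iff o_def of_int_prod_list)
  moreover have "finite A"
    using assms finite_subset by blast
  ultimately show ?thesis
    using prod_card_diff_in_low_degree_span[OF _ assms(2), of "map of_int cs"] by simp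
qed

lemma card_subsets_card_le:
  assumes "finite U"
  shows "card {S. S \<subseteq> U \<and> card S \<le> d} = (\<Sum>i=0..d. card U choose i)"
proof -
  have "{S. S \<subseteq> U \<and> card S \<le> d} = (\<Union>i\<in>{0..d}. {S. S \<subseteq> U \<and> card S = i})"
    by auto
  then have "card {S. S \<subseteq> U \<and> card S \<le> d} = (\<Sum>i=0..d. card {S. S \<subseteq> U \<and> card S = i})"
    by (simp only:) (rule card_UN_disjoint, use assms in \<open>auto intro: rev_finite_subset[of "Pow U"]\<close>)
  also have "\<dots> = (\<Sum>i=0..d. card U choose i)"
    using assms by (simp add: n_subsets)
  finally show ?thesis .
qed

lemma card_independent_in_low_degree_span:
  fixes V :: "('a set \<Rightarrow> 'b::field) set"
  assumes "finite U" "fun_space.independent V" "V \<subseteq> low_degree_span U d"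
  shows "card V \<le> (\<Sum>i=0..d. card U choose i)"
proof -
  have fin: "finite {S. S \<subseteq> U \<and> card S \<le> d}"
    using assms(1) by simp
  have "V \<subseteq> fun_space.span (disjoint_indicator ` {S. S \<subseteq> U \<and> card S \<le> d})"
    using assms(3) unfolding low_degree_span_def .
  then have "card V \<le> card (disjoint_indicator ` {S. S \<subseteq> U \<and> card S \<le> d} :: ('a set \<Rightarrow> 'b) set)"
    using fun_space.independent_span_bound[OF finite_imageI[OF fin] assms(2)] by simp
  also have "\<dots> \<le> card {S. S \<subseteq> U \<and> card S \<le> d}"
    using fin by (rule card_image_le)
  finally show ?thesis
    using card_subsets_card_le[OF assms(1)] by simp
qed

section \<open>Matrices that are diagonal modulo a prime\<close>

definition padic_diagonal :: "int \<Rightarrow> nat \<Rightarrow> 'a set \<Rightarrow> ('a \<Rightarrow> 'a \<Rightarrow> int) \<Rightarrow> bool" where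
  "padic_diagonal p E F h \<longleftrightarrow>
     (\<forall>A\<in>F. p ^ E dvd h A A \<and> \<not> p ^ Suc E dvd h A A) \<and>
     (\<forall>A\<in>F. \<forall>B\<in>F. A \<noteq> B \<longrightarrow> p ^ Suc E dvd h A B)"

lemma padic_diagonal_prime_dvd_coeff:
  assumes p: "prime p" and "finite F" and h: "padic_diagonal p E F h"
    and B: "B \<in> F" and comb: "(\<Sum>A\<in>F. b A * h A B) = 0"
  shows "p dvd b B"
proof -
  have "p ^ Suc E dvd (\<Sum>A\<in>F - {B}. b A * h A B)"
    using h B by (intro dvd_sum) (auto simp: padic_diagonal_def)
  moreover have "(\<Sum>A\<in>F. b A * h A B) = b B * h B B + (\<Sum>A\<in>F - {B}. b A * h A B)"
    using B \<open>finite F\<close> by (simp add: sum.remove)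
  ultimately have "p ^ Suc E dvd b B * h B B"
    using comb by (metis add_eq_0_iff dvd_minus_iff)
  moreover obtain u where u: "h B B = p ^ E * u"
    using h B unfolding padic_diagonal_def by (meson dvdE)
  moreover have "\<not> p dvd u"
  proof
    assume "p dvd u"
    then have "p ^ E * p dvd h B B"
      unfolding u by (rule mult_dvd_mono[OF dvd_refl])
    with h B show False
      by (simp add: padic_diagonal_def mult.commute)
  qed
  ultimately have "p ^ E * p dvd p ^ E * (b B * u)"
    by (simp add: ac_simps)
  then have "p dvd b B * u"
    using p by (simp add: prime_gt_0_int)
  then show ?thesis
    using \<open>\<not> p dvd u\<close> p by (simp add: prime_dvd_mult_iff)
qed

lemma eq_0_if_all_powers_dvd:
  fixes x :: "'a::factorial_semiring"
  assumes "\<not> is_unit p" and "\<And>m. p ^ m dvd x"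
  shows "x = 0"
proof (rule ccontr)
  assume "x \<noteq> 0"
  then have "finite {m. p ^ m dvd x}"
    using finite_divisor_powers assms(1) by blast
  with assms(2) show False
    by simp
qed

text \<open>Dividing a vanishing combination by \<open>p\<close> gives a vanishing combination again.\<close>

lemma padic_diagonal_int_combination_eq_0:
  assumes p: "prime p" and "finite F" and h: "padic_diagonal p E F h"
    and comb: "\<And>B. B \<in> F \<Longrightarrow> (\<Sum>A\<in>F. b A * h A B) = 0" and A: "A \<in> F"
  shows "b A = 0"
proof -
  have "\<forall>A\<in>F. p ^ m dvd b A" for m
  proof (induction m)
    case 0
    then show ?case by simp
  next
    case (Suc m)
    define c where "c A = b A div p ^ m" for A
    have b: "b A = p ^ m * c A" if "A \<in> F" for A
      using Suc.IH that by (simp add: c_def)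
    have "(\<Sum>A\<in>F. c A * h A B) = 0" if "B \<in> F" for B
    proof -
      have "p ^ m * (\<Sum>A\<in>F. c A * h A B) = (\<Sum>A\<in>F. b A * h A B)"
        by (simp add: sum_distrib_left b mult.assoc)
      then show ?thesis
        using comb[OF that] p by (simp add: prime_gt_0_int)
    qed
    then have "p dvd c A" if "A \<in> F" for A
      using padic_diagonal_prime_dvd_coeff[OF p \<open>finite F\<close> h that, where b = c] that by blast
    then show ?case
      using b by (auto simp: mult_dvd_mono)
  qed
  moreover have "\<not> is_unit p"
    using p not_prime_unit by blast
  ultimately show ?thesis
    using eq_0_if_all_powers_dvd A by blast
qed

lemma exists_common_denominator:
  fixes a :: "'a \<Rightarrow> rat"
  assumes "finite F"
  shows "\<exists>N b. N > 0 \<and> (\<forall>A\<in>F. of_int N * a A = of_int (b A))"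
proof -
  define d where "d A = snd (quotient_of (a A))" for A
  define n where "n A = fst (quotient_of (a A))" for A
  have a: "a A = of_int (n A) / of_int (d A)" and d: "d A > 0" for A
    using quotient_of_div[of "a A" "n A" "d A"] quotient_of_denom_pos[of "a A" "n A" "d A"]
    by (simp_all add: n_def d_def)
  have "of_int (\<Prod>B\<in>F. d B) * a A = of_int (n A * (\<Prod>B\<in>F - {A}. d B))" if "A \<in> F" for A
    using that assms d[of A] by (simp add: a prod.remove)
  moreover have "(\<Prod>B\<in>F. d B) > 0"
    using d by (simp add: prod_pos)
  ultimately show ?thesis
    by (intro exI[of _ "\<Prod>B\<in>F. d B"] exI[of _ "\<lambda>A. n A * (\<Prod>B\<in>F - {A}. d B)"]) simp
qed

lemma padic_diagonal_rat_combination_eq_0: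
  fixes a :: "'a \<Rightarrow> rat"
  assumes p: "prime p" and "finite F" and h: "padic_diagonal p E F h"
    and comb: "\<And>B. B \<in> F \<Longrightarrow> (\<Sum>A\<in>F. a A * of_int (h A B)) = 0" and A: "A \<in> F"
  shows "a A = 0"
proof -
  obtain N b where N: "N > 0" and b: "\<And>A. A \<in> F \<Longrightarrow> of_int N * a A = of_int (b A)"
    using exists_common_denominator[OF \<open>finite F\<close>, of a] by blast
  have "(\<Sum>A\<in>F. b A * h A B) = 0" if "B \<in> F" for B
  proof -
    have "(of_int (\<Sum>A\<in>F. b A * h A B) :: rat) = of_int N * (\<Sum>A\<in>F. a A * of_int (h A B))"
      by (simp add: sum_distrib_left mult.assoc flip: b)
    then have "(of_int (\<Sum>A\<in>F. b A * h A B) :: rat) = 0"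
      using comb[OF that] by simp
    then show ?thesis
      by (rule of_int_eq_0_iff[THEN iffD1])
  qed
  then have "b A = 0"
    using padic_diagonal_int_combination_eq_0[OF p \<open>finite F\<close> h] A by blast
  then show ?thesis
    using b[OF A] N by simp
qed

lemma padic_diagonal_inj:
  assumes "padic_diagonal p E F h"
  shows "inj_on (\<lambda>A X. (of_int (h A X) :: rat)) F"
proof
  fix A B
  assume "A \<in> F" "B \<in> F" and "(\<lambda>X. (of_int (h A X) :: rat)) = (\<lambda>X. of_int (h B X))"
  then have "h A B = h B B"
    by (metis of_int_eq_iff)
  with assms \<open>A \<in> F\<close> \<open>B \<in> F\<close> show "A = B"
    unfolding padic_diagonal_def by metis
qed

lemma padic_diagonal_independent:
  assumes p: "prime p" and "finite F" and h: "padic_diagonal p E F h"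
  shows "fun_space.independent ((\<lambda>A X. (of_int (h A X) :: rat)) ` F)"
proof
  let ?G = "\<lambda>A X. (of_int (h A X) :: rat)"
  assume dependent: "fun_space.dependent (?G ` F)"
  obtain u where u: "\<exists>v\<in>?G ` F. u v \<noteq> 0" and comb: "(\<Sum>v\<in>?G ` F. fun_scale (u v) v) = 0"
    using fun_space.dependent_finite[OF finite_imageI[OF \<open>finite F\<close>], THEN iffD1, OF dependent]
    by (elim exE conjE)
  have sum_0: "(\<Sum>A\<in>F. fun_scale (u (?G A)) (?G A)) = 0"
    using comb sum.reindex[OF padic_diagonal_inj[OF h], of "\<lambda>v. fun_scale (u v) v"] by simp
  have comb_B: "(\<Sum>A\<in>F. u (?G A) * of_int (h A B)) = 0" for B
    using fun_cong[OF sum_0, of B] by (simp add: sum_fun_apply fun_scale_def)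
  have "u (?G A) = 0" if "A \<in> F" for A
    using padic_diagonal_rat_combination_eq_0[OF p \<open>finite F\<close> h, where a = "\<lambda>A. u (?G A)"] comb_B that
    by blast
  with u show False
    by blast
qed

lemma padic_diagonal_card_le:
  assumes p: "prime p" and U: "finite U" "F \<subseteq> Pow U" and h: "padic_diagonal p E F h"
    and span: "\<And>A. A \<in> F \<Longrightarrow> (\<lambda>X. of_int (h A X) :: rat) \<in> low_degree_span U d"
  shows "card F \<le> (\<Sum>i=0..d. card U choose i)"
proof -
  have "finite F"
    using U by (meson finite_Pow_iff finite_subset)
  then have "card F = card ((\<lambda>A X. of_int (h A X) :: rat) ` F)"
    using card_image[OF padic_diagonal_inj[OF h]] by simp
  also have "\<dots> \<le> (\<Sum>i=0..d. card U choose i)"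
    using span by (intro card_independent_in_low_degree_span[OF U(1)]
        padic_diagonal_independent[OF p \<open>finite F\<close> h]) blast
  finally show ?thesis .
qed

section \<open>Modular \<open>L\<close>-differencing Sperner families\<close>

lemma modular_L_differencing_Sperner_residue:
  assumes "modular_L_differencing_Sperner q L F" "L \<subseteq> {1..q - 1}"
    and "A \<in> F" "B \<in> F" "A \<noteq> B"
  shows "int (card (A - B)) mod int q \<in> int ` L"
proof -
  obtain l where l: "l \<in> L" "card (A - B) mod q = l mod q"
    using assms unfolding modular_L_differencing_Sperner_def by blast
  then have "l < q"
    using assms(2) by force
  then have "int (card (A - B)) mod int q = int l"
    using l(2) by (metis mod_less of_nat_mod)
  then show ?thesis
    using l(1) by simp
qed

lemma padic_diagonal_card_diff_products:
  fixes p :: int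
  assumes p: "prime p" and F: "modular_L_differencing_Sperner q L F" and L: "L \<subseteq> {1..q - 1}"
    and cs: "set cs \<subseteq> int ` L"
    and gain: "\<And>y. y mod int q \<in> int ` L \<Longrightarrow>
      p ^ Suc (\<Sum>c\<leftarrow>cs. multiplicity p c) dvd (\<Prod>c\<leftarrow>cs. y - c)"
  shows "padic_diagonal p (\<Sum>c\<leftarrow>cs. multiplicity p c) F (\<lambda>A B. \<Prod>c\<leftarrow>cs. int (card (A - B)) - c)"
proof -
  have "0 \<notin> int ` L"
    using L by auto
  then have "0 \<notin> set cs"
    using cs by blast
  then have "p ^ (\<Sum>c\<leftarrow>cs. multiplicity p c) dvd (\<Prod>c\<leftarrow>cs. - c)"
    and "\<not> p ^ Suc (\<Sum>c\<leftarrow>cs. multiplicity p c) dvd (\<Prod>c\<leftarrow>cs. - c)"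
    using exact_power_dvd_prod_list_uminus[OF p] by blast+
  moreover have zero_minus: "map ((-) 0) cs = map uminus cs"
    by (induction cs) simp_all
  ultimately show ?thesis
    unfolding padic_diagonal_def
    using gain modular_L_differencing_Sperner_residue[OF F L] by (simp add: zero_minus)
qed

theorem mainTheorem8:
  fixes q n s :: nat and L :: "nat set" and F :: "nat set set"
  assumes "prime_power q"
    and "L \<subseteq> {1..q-1}"
    and "card L = s" and "s \<ge> 1"
    and "F \<subseteq> Pow {1..n}"
    and "modular_L_differencing_Sperner q L F"
  shows "card F \<le> (\<Sum>i=0..2^(s-1). n choose i)"
proof -
  have "card L = Suc (s - 1)"
    using assms(3,4) by simp
  then obtain p cs where p: "prime p" and cs: "length cs = 2 ^ (s - 1)" "set cs \<subseteq> int ` L"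
    and gain: "\<And>y. y mod int q \<in> int ` L \<Longrightarrow>
      p ^ Suc (\<Sum>c\<leftarrow>cs. multiplicity p c) dvd (\<Prod>c\<leftarrow>cs. y - c)"
    by (rule exists_root_list_modulo_prime_power[OF assms(1,2)]) (rule that)
  then have "padic_diagonal p (\<Sum>c\<leftarrow>cs. multiplicity p c) F
      (\<lambda>A B. \<Prod>c\<leftarrow>cs. int (card (A - B)) - c)"
    using padic_diagonal_card_diff_products[OF p assms(6,2)] by blast
  then have "card F \<le> (\<Sum>i=0..length cs. card {1..n} choose i)"
    using padic_diagonal_card_le[OF p finite_atLeastAtMost assms(5)]
      of_int_prod_card_diff_in_low_degree_span[OF finite_atLeastAtMost] assms(5) by blast
  then show ?thesis
    using cs(1) by simp
qed

end
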